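(* Let $E$ be a graph and $K$ a field with involution. If $L_K(E)$ is directly finite, or if $L_K(E)$ is finite, then $E$ is no-exit.
   Context: A (directed) graph $E=(E^0,E^1,\mathbf{s},\mathbf{r})$ has vertex set $E^0$, edge set $E^1$, source and range maps; no finiteness or countability is assumed. A path is a vertex or a sequence $p=e_1\cdots e_n$ of edges with $\mathbf{r}(e_i)=\mathbf{s}(e_{i+1})$, $\mathbf{s}(p)=\mathbf{s}(e_1)$, $\mathbf{r}(p)=\mathbf{r}(e_n)$. A cycle is a path $e_1\cdots e_n$ ($n\ge1$) with $\mathbf{s}(e_1)=\mathbf{r}(e_n)$ and $\mathbf{s}(e_i)\ne\mathbf{s}(e_j)$ for $i\ne j$. $E$ is no-exit if $\mathbf{s}^{-1}(v)$ has exactly one element for every vertex $v$ lying on a cycle. A vertex $v$ is regular if $\mathbf{s}^{-1}(v)$ is nonempty and finite. $K$ has an arbitrary involution. $L_K(E)$ is the free $K$-algebra generated by $E^0\cup E^1\cup\{e^*:e\in E^1\}$ subject to (V) $vw=\delta_{v,w}v$; (E1) $\mathbf{s}(e)e=e\mathbf{r}(e)=e$; (E2) $\mathbf{r}(e)e^*=e^*\mathbf{s}(e)=e^*$; (CK1) $e^*f=\delta_{e,f}\mathbf{r}(e)$; (CK2) $v=\sum_{e\in\mathbf{s}^{-1}(v)}ee^*$ for regular $v$; it has involution $(\sum a_ip_iq_i^* )^*=\sum a_i^*q_ip_i^*$ ($p^*=e_n^*\cdots e_1^*$, $v^*=v$) and has local units (finite sums of vertices). A ring with local units is directly finite if for all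 $x,y$ and every idempotent $u$ with $xu=ux=x$, $yu=uy=y$, $xy=u$ implies $yx=u$; a $*$-ring with local units is finite if for all $x$ and every idempotent $u$ with $xu=ux=x$, $xx^*=u$ implies $x^*x=u$. *)

theory Defs
  imports Main
begin

text \<open>A graph is given by a vertex set V, an edge set Ed, and source/range maps s, r
  (no finiteness or countability).\<close>

definition is_cycle :: "'e set \<Rightarrow> ('e \<Rightarrow> 'v) \<Rightarrow> ('e \<Rightarrow> 'v) \<Rightarrow> 'e list \<Rightarrow> bool" where
  "is_cycle Ed s r c \<longleftrightarrow> c \<noteq> [] \<and> set c \<subseteq> Ed
     \<and> (\<forall>i. Suc i < length c \<longrightarrow> r (c ! i) = s (c ! Suc i))
     \<and> s (hd c) = r (last c) \<and> distinct (map s c)"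

definition no_exit :: "'v set \<Rightarrow> 'e set \<Rightarrow> ('e \<Rightarrow> 'v) \<Rightarrow> ('e \<Rightarrow> 'v) \<Rightarrow> bool" where
  "no_exit V Ed s r \<longleftrightarrow>
     (\<forall>c v. is_cycle Ed s r c \<and> v \<in> s ` set c \<longrightarrow> (\<exists>!e. e \<in> Ed \<and> s e = v))"

definition regular_vertex :: "'e set \<Rightarrow> ('e \<Rightarrow> 'v) \<Rightarrow> 'v \<Rightarrow> bool" where
  "regular_vertex Ed s v \<longleftrightarrow> {e \<in> Ed. s e = v} \<noteq> {} \<and> finite {e \<in> Ed. s e = v}"

datatype ('v, 'e) lgen = LV 'v | LE 'e | LG 'e  (* vertex, edge e, ghost edge e^* *)

fun gstar :: "('v, 'e) lgen \<Rightarrow> ('v, 'e) lgen" where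
  "gstar (LV v) = LV v" | "gstar (LE e) = LG e" | "gstar (LG e) = LE e"

text \<open>Noncommutative polynomials: coefficient functions on words. The (unital) free algebra
  consists of the finitely supported ones; the non-unital free algebra on the generators
  consists of those with zero coefficient at the empty word.\<close>

type_synonym ('v, 'e, 'k) fpoly = "('v, 'e) lgen list \<Rightarrow> 'k"

definition fsupp :: "('v, 'e, 'k::zero) fpoly \<Rightarrow> bool" where
  "fsupp p \<longleftrightarrow> finite {w. p w \<noteq> 0}"

definition FA :: "('v, 'e, 'k::zero) fpoly set" where
  "FA = {p. fsupp p \<and> p [] = 0}"

definition fzero :: "('v, 'e, 'k::zero) fpoly" where
  "fzero = (\<lambda>w. 0)"

definition fadd :: "('v, 'e, 'k::plus) fpoly \<Rightarrow> ('v, 'e, 'k) fpoly \<Rightarrow> ('v, 'e, 'k) fpoly" where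
  "fadd p q = (\<lambda>w. p w + q w)"

definition fdiff :: "('v, 'e, 'k::minus) fpoly \<Rightarrow> ('v, 'e, 'k) fpoly \<Rightarrow> ('v, 'e, 'k) fpoly" where
  "fdiff p q = (\<lambda>w. p w - q w)"

definition fmul :: "('v, 'e, 'k::comm_semiring_1) fpoly \<Rightarrow> ('v, 'e, 'k) fpoly \<Rightarrow> ('v, 'e, 'k) fpoly" where
  "fmul p q = (\<lambda>w. \<Sum>i\<le>length w. p (take i w) * q (drop i w))"

definition mono :: "('v, 'e) lgen \<Rightarrow> ('v, 'e, 'k::{zero,one}) fpoly" where
  "mono g = (\<lambda>w. if w = [g] then 1 else 0)"

text \<open>The involution induced by an involution sigma of K:
  (sum a_i w_i)^* = sum sigma(a_i) w_i^*, where a word is starred by reversing and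
  exchanging e and e^* (vertices fixed).\<close>

definition fstar :: "('k \<Rightarrow> 'k) \<Rightarrow> ('v, 'e, 'k) fpoly \<Rightarrow> ('v, 'e, 'k) fpoly" where
  "fstar \<sigma> p = (\<lambda>w. \<sigma> (p (rev (map gstar w))))"

inductive_set lpa_rels :: "'v set \<Rightarrow> 'e set \<Rightarrow> ('e \<Rightarrow> 'v) \<Rightarrow> ('e \<Rightarrow> 'v)
    \<Rightarrow> ('v, 'e, 'k::field) fpoly set"
  for V Ed s r where
  relV: "v \<in> V \<Longrightarrow> w \<in> V \<Longrightarrow>
     fdiff (fmul (mono (LV v)) (mono (LV w))) (if v = w then mono (LV v) else fzero) \<in> lpa_rels V Ed s r"
| relE1a: "e \<in> Ed \<Longrightarrow> fdiff (fmul (mono (LV (s e))) (mono (LE e))) (mono (LE e)) \<in> lpa_rels V Ed s r"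
| relE1b: "e \<in> Ed \<Longrightarrow> fdiff (fmul (mono (LE e)) (mono (LV (r e)))) (mono (LE e)) \<in> lpa_rels V Ed s r"
| relE2a: "e \<in> Ed \<Longrightarrow> fdiff (fmul (mono (LV (r e))) (mono (LG e))) (mono (LG e)) \<in> lpa_rels V Ed s r"
| relE2b: "e \<in> Ed \<Longrightarrow> fdiff (fmul (mono (LG e)) (mono (LV (s e)))) (mono (LG e)) \<in> lpa_rels V Ed s r"
| relCK1: "e \<in> Ed \<Longrightarrow> f \<in> Ed \<Longrightarrow>
     fdiff (fmul (mono (LG e)) (mono (LE f))) (if e = f then mono (LV (r e)) else fzero) \<in> lpa_rels V Ed s r"
| relCK2: "v \<in> V \<Longrightarrow> regular_vertex Ed s v \<Longrightarrow>
     fdiff (mono (LV v)) (\<lambda>w. \<Sum>e\<in>{e \<in> Ed. s e = v}. fmul (mono (LE e)) (mono (LG e)) w)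
       \<in> lpa_rels V Ed s r"

text \<open>Two-sided ideal generated by a set of relations: finite sums of terms a*rel*b,
  with a, b finitely supported (possibly containing the empty word, so that scalars,
  rel, a*rel and rel*b are all covered).\<close>

inductive_set gen_ideal :: "('v, 'e, 'k::field) fpoly set \<Rightarrow> ('v, 'e, 'k) fpoly set"
  for R where
  zero: "fzero \<in> gen_ideal R"
| gen: "x \<in> R \<Longrightarrow> fsupp a \<Longrightarrow> fsupp b \<Longrightarrow> fmul (fmul a x) b \<in> gen_ideal R"
| add: "p \<in> gen_ideal R \<Longrightarrow> q \<in> gen_ideal R \<Longrightarrow> fadd p q \<in> gen_ideal R"

text \<open>Equality in L_K(E) of (classes of) elements of the free algebra.\<close>

definition lpa_eq :: "'v set \<Rightarrow> 'e set \<Rightarrow> ('e \<Rightarrow> 'v) \<Rightarrow> ('e \<Rightarrow> 'v)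
    \<Rightarrow> ('v, 'e, 'k::field) fpoly \<Rightarrow> ('v, 'e, 'k) fpoly \<Rightarrow> bool" where
  "lpa_eq V Ed s r p q \<longleftrightarrow> fdiff p q \<in> gen_ideal (lpa_rels V Ed s r)"

definition lpa_directly_finite :: "'k::field itself \<Rightarrow> 'v set \<Rightarrow> 'e set \<Rightarrow> ('e \<Rightarrow> 'v) \<Rightarrow> ('e \<Rightarrow> 'v) \<Rightarrow> bool" where
  "lpa_directly_finite (TYPE('k)) V Ed s r \<longleftrightarrow>
     (\<forall>x y u :: ('v, 'e, 'k) fpoly. x \<in> FA \<longrightarrow> y \<in> FA \<longrightarrow> u \<in> FA \<longrightarrow>
        lpa_eq V Ed s r (fmul u u) u \<longrightarrow>
        lpa_eq V Ed s r (fmul x u) x \<longrightarrow> lpa_eq V Ed s r (fmul u x) x \<longrightarrow>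
        lpa_eq V Ed s r (fmul y u) y \<longrightarrow> lpa_eq V Ed s r (fmul u y) y \<longrightarrow>
        lpa_eq V Ed s r (fmul x y) u \<longrightarrow> lpa_eq V Ed s r (fmul y x) u)"

definition lpa_finite :: "('k::field \<Rightarrow> 'k) \<Rightarrow> 'v set \<Rightarrow> 'e set \<Rightarrow> ('e \<Rightarrow> 'v) \<Rightarrow> ('e \<Rightarrow> 'v) \<Rightarrow> bool" where
  "lpa_finite \<sigma> V Ed s r \<longleftrightarrow>
     (\<forall>x u :: ('v, 'e, 'k) fpoly. x \<in> FA \<longrightarrow> u \<in> FA \<longrightarrow>
        lpa_eq V Ed s r (fmul u u) u \<longrightarrow>
        lpa_eq V Ed s r (fmul x u) x \<longrightarrow> lpa_eq V Ed s r (fmul u x) x \<longrightarrow>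
        lpa_eq V Ed s r (fmul x (fstar \<sigma> x)) u \<longrightarrow> lpa_eq V Ed s r (fmul (fstar \<sigma> x) x) u)"

definition field_involution :: "('k::field \<Rightarrow> 'k) \<Rightarrow> bool" where
  "field_involution \<sigma> \<longleftrightarrow> (\<forall>a b. \<sigma> (a + b) = \<sigma> a + \<sigma> b) \<and> (\<forall>a b. \<sigma> (a * b) = \<sigma> a * \<sigma> b)
     \<and> (\<forall>a. \<sigma> (\<sigma> a) = a)"

end

theory Submission
  imports Defs
begin

text \<open>Suppose a vertex v on a cycle has a second outgoing edge f, and let p be the cycle read as a
  closed path starting at v. Then p* p = v in L_K(E), and v is a local unit for p and p*, while
  p p* \<noteq> v. This contradicts direct finiteness (with x = p*, y = p, u = v) and, since p is the
  involution of p*, also finiteness. To see that p p* \<noteq> v, let the free algebra act on the span of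
  the boundary paths of E: all defining relations of L_K(E) hold there, v fixes the boundary path
  x0 that starts with f, but p* (whose last letter is the ghost of the first edge of p) kills x0.
  Hence the coefficient of x0 in w x0, extended linearly in w, is a functional that vanishes on the
  ideal of relations yet takes the value 1 on v and 0 on p p*.\<close>

definition word :: "('v, 'e) lgen list \<Rightarrow> ('v, 'e, 'k::{zero,one}) fpoly" where
  "word a = (\<lambda>u. if u = a then 1 else 0)"

definition support :: "('v, 'e, 'k::zero) fpoly \<Rightarrow> ('v, 'e) lgen list set" where
  "support p = {w. p w \<noteq> 0}"

lemma fsupp_iff_finite_support: "fsupp p \<longleftrightarrow> finite (support p)"
  by (simp add: fsupp_def support_def)

lemma support_word [simp]: "support (word a :: ('v, 'e, 'k::zero_neq_one) fpoly) = {a}"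
  by (auto simp: support_def word_def)

lemma fsupp_word [simp]: "fsupp (word a :: ('v, 'e, 'k::zero_neq_one) fpoly)"
  by (simp add: fsupp_iff_finite_support)

lemma word_in_FA: "w \<noteq> [] \<Longrightarrow> (word w :: ('v, 'e, 'k::zero_neq_one) fpoly) \<in> FA"
  by (simp add: FA_def) (simp add: word_def)

lemma mono_eq_word: "mono g = word [g]"
  by (simp add: mono_def word_def)

lemma fmul_word: "fmul (word a) (word b) = (word (a @ b) :: ('v, 'e, 'k::comm_semiring_1) fpoly)"
proof
  fix w :: "('v, 'e) lgen list"
  have split_iff: "take i w = a \<and> drop i w = b \<longleftrightarrow> w = a @ b \<and> i = length a" if "i \<le> length w" for i
    using that by (metis append_eq_conv_conj append_take_drop_id length_take min.absorb2)
  have "fmul (word a) (word b) w = (\<Sum>i\<le>length w. if w = a @ b \<and> i = length a then (1::'k) else 0)"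
    unfolding fmul_def word_def by (rule sum.cong) (use split_iff in auto)
  also have "\<dots> = word (a @ b) w"
    by (auto simp: word_def)
  finally show "fmul (word a) (word b) w = (word (a @ b) w :: 'k)" .
qed

lemma fmul_fdiff_right: "fmul a (fdiff p q) = fdiff (fmul a p) (fmul a q :: ('v, 'e, 'k::comm_ring_1) fpoly)"
  unfolding fmul_def fdiff_def by (simp add: right_diff_distrib sum_subtractf)

lemma fmul_fdiff_left: "fmul (fdiff p q) a = fdiff (fmul p a) (fmul q a :: ('v, 'e, 'k::comm_ring_1) fpoly)"
  unfolding fmul_def fdiff_def by (simp add: left_diff_distrib sum_subtractf)

lemma lpa_eq_trans [trans]: "lpa_eq V Ed s r p q \<Longrightarrow> lpa_eq V Ed s r q t \<Longrightarrow> lpa_eq V Ed s r p t"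
proof -
  assume "lpa_eq V Ed s r p q" "lpa_eq V Ed s r q t"
  moreover have "fdiff p t = fadd (fdiff p q) (fdiff q t)"
    by (simp add: fdiff_def fadd_def)
  ultimately show ?thesis
    unfolding lpa_eq_def by (simp add: gen_ideal.add)
qed

lemma lpa_eq_word_rewrite:
  assumes "(fdiff (word l) (word m) :: ('v, 'e, 'k::field) fpoly) \<in> lpa_rels V Ed s r"
    and "a = \<alpha> @ l @ \<beta>" and "b = \<alpha> @ m @ \<beta>"
  shows "lpa_eq V Ed s r (word a :: ('v, 'e, 'k) fpoly) (word b)"
proof -
  have "fmul (fmul (word \<alpha>) (fdiff (word l) (word m) :: ('v, 'e, 'k) fpoly)) (word \<beta>)
      \<in> gen_ideal (lpa_rels V Ed s r)"
    by (rule gen_ideal.gen[OF assms(1)]) simp_all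
  then show ?thesis
    using assms(2,3) by (simp add: lpa_eq_def fmul_fdiff_right fmul_fdiff_left fmul_word)
qed

lemma lpa_rels_vertex_word:
  "v \<in> V \<Longrightarrow> (fdiff (word [LV v, LV v]) (word [LV v]) :: ('v, 'e, 'k::field) fpoly) \<in> lpa_rels V Ed s r"
  using relV[of v V v] by (simp add: mono_eq_word fmul_word)

lemma lpa_rels_source_edge_word:
  "e \<in> Ed \<Longrightarrow> (fdiff (word [LV (s e), LE e]) (word [LE e]) :: ('v, 'e, 'k::field) fpoly) \<in> lpa_rels V Ed s r"
  using relE1a[of e Ed] by (simp add: mono_eq_word fmul_word)

lemma lpa_rels_edge_range_word:
  "e \<in> Ed \<Longrightarrow> (fdiff (word [LE e, LV (r e)]) (word [LE e]) :: ('v, 'e, 'k::field) fpoly) \<in> lpa_rels V Ed s r"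
  using relE1b[of e Ed] by (simp add: mono_eq_word fmul_word)

lemma lpa_rels_range_ghost_word:
  "e \<in> Ed \<Longrightarrow> (fdiff (word [LV (r e), LG e]) (word [LG e]) :: ('v, 'e, 'k::field) fpoly) \<in> lpa_rels V Ed s r"
  using relE2a[of e Ed] by (simp add: mono_eq_word fmul_word)

lemma lpa_rels_ghost_source_word:
  "e \<in> Ed \<Longrightarrow> (fdiff (word [LG e, LV (s e)]) (word [LG e]) :: ('v, 'e, 'k::field) fpoly) \<in> lpa_rels V Ed s r"
  using relE2b[of e Ed] by (simp add: mono_eq_word fmul_word)

lemma lpa_rels_ghost_edge_word:
  "e \<in> Ed \<Longrightarrow> (fdiff (word [LG e, LE e]) (word [LV (r e)]) :: ('v, 'e, 'k::field) fpoly) \<in> lpa_rels V Ed s r"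
  using relCK1[of e Ed e] by (simp add: mono_eq_word fmul_word)

definition path_word :: "'e list \<Rightarrow> ('v, 'e) lgen list" where
  "path_word p = map LE p"

definition ghost_word :: "'e list \<Rightarrow> ('v, 'e) lgen list" where
  "ghost_word p = map LG (rev p)"

lemma lpa_eq_vertex_idem:
  "v \<in> V \<Longrightarrow> lpa_eq V Ed s r (fmul (word [LV v]) (word [LV v])) (word [LV v] :: ('v, 'e, 'k::field) fpoly)"
  unfolding fmul_word by (rule lpa_eq_word_rewrite[OF lpa_rels_vertex_word, where \<alpha> = "[]" and \<beta> = "[]"]) simp_all

lemma lpa_eq_source_path:
  assumes "p \<noteq> []" "set p \<subseteq> Ed"
  shows "lpa_eq V Ed s r (fmul (word [LV (s (hd p))]) (word (path_word p)))
    (word (path_word p) :: ('v, 'e, 'k::field) fpoly)"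
proof -
  obtain e q where p: "p = e # q" using assms(1) by (cases p) auto
  show ?thesis
    unfolding fmul_word
    by (rule lpa_eq_word_rewrite[OF lpa_rels_source_edge_word[of e], where \<alpha> = "[]" and \<beta> = "map LE q"])
      (use assms(2) p in \<open>simp_all add: path_word_def\<close>)
qed

lemma lpa_eq_path_range:
  assumes "p \<noteq> []" "set p \<subseteq> Ed"
  shows "lpa_eq V Ed s r (fmul (word (path_word p)) (word [LV (r (last p))]))
    (word (path_word p) :: ('v, 'e, 'k::field) fpoly)"
proof -
  obtain e q where p: "p = q @ [e]" using assms(1) by (cases p rule: rev_cases) auto
  show ?thesis
    unfolding fmul_word
    by (rule lpa_eq_word_rewrite[OF lpa_rels_edge_range_word[of e], where \<alpha> = "map LE q" and \<beta> = "[]"])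
      (use assms(2) p in \<open>simp_all add: path_word_def\<close>)
qed

lemma lpa_eq_range_ghost:
  assumes "p \<noteq> []" "set p \<subseteq> Ed"
  shows "lpa_eq V Ed s r (fmul (word [LV (r (last p))]) (word (ghost_word p)))
    (word (ghost_word p) :: ('v, 'e, 'k::field) fpoly)"
proof -
  obtain e q where p: "p = q @ [e]" using assms(1) by (cases p rule: rev_cases) auto
  show ?thesis
    unfolding fmul_word
    by (rule lpa_eq_word_rewrite[OF lpa_rels_range_ghost_word[of e], where \<alpha> = "[]" and \<beta> = "map LG (rev q)"])
      (use assms(2) p in \<open>simp_all add: ghost_word_def\<close>)
qed

lemma lpa_eq_ghost_source:
  assumes "p \<noteq> []" "set p \<subseteq> Ed"
  shows "lpa_eq V Ed s r (fmul (word (ghost_word p)) (word [LV (s (hd p))]))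
    (word (ghost_word p) :: ('v, 'e, 'k::field) fpoly)"
proof -
  obtain e q where p: "p = e # q" using assms(1) by (cases p) auto
  show ?thesis
    unfolding fmul_word
    by (rule lpa_eq_word_rewrite[OF lpa_rels_ghost_source_word[of e], where \<alpha> = "map LG (rev q)" and \<beta> = "[]"])
      (use assms(2) p in \<open>simp_all add: ghost_word_def\<close>)
qed

lemma lpa_eq_ghost_path:
  assumes "p \<noteq> []" "set p \<subseteq> Ed" "successively (\<lambda>e e'. r e = s e') p"
  shows "lpa_eq V Ed s r (fmul (word (ghost_word p)) (word (path_word p)))
    (word [LV (r (last p))] :: ('v, 'e, 'k::field) fpoly)"
  using assms
proof (induction p)
  case Nil
  then show ?case by simp
next
  case (Cons e q)
  show ?case
  proof (cases q)
    case Nil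
    show ?thesis
      unfolding fmul_word
      by (rule lpa_eq_word_rewrite[OF lpa_rels_ghost_edge_word[of e], where \<alpha> = "[]" and \<beta> = "[]"])
        (use Cons.prems Nil in \<open>simp_all add: ghost_word_def path_word_def\<close>)
  next
    case (Cons e' q')
    then have "r e = s e'" and q: "q \<noteq> []" "set q \<subseteq> Ed" "successively (\<lambda>e e'. r e = s e') q"
      using Cons.prems by auto
    have "lpa_eq V Ed s r (word (ghost_word (e # q) @ path_word (e # q)) :: ('v, 'e, 'k) fpoly)
        (word (ghost_word q @ [LV (s e')] @ path_word q))"
      by (rule lpa_eq_word_rewrite[OF lpa_rels_ghost_edge_word[of e], where \<alpha> = "ghost_word q" and \<beta> = "path_word q"])
        (use Cons.prems \<open>r e = s e'\<close> in \<open>simp_all add: ghost_word_def path_word_def\<close>)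
    also have "lpa_eq V Ed s r \<dots> (word (ghost_word q @ path_word q))"
      by (rule lpa_eq_word_rewrite[OF lpa_rels_source_edge_word[of e'], where \<alpha> = "ghost_word q" and \<beta> = "map LE q'"])
        (use q Cons in \<open>simp_all add: path_word_def\<close>)
    also have "lpa_eq V Ed s r \<dots> (word [LV (r (last q))])"
      using Cons.IH[OF q] by (simp add: fmul_word)
    finally show ?thesis
      using q by (simp add: fmul_word)
  qed
qed

lemma field_involution_zero: "field_involution \<sigma> \<Longrightarrow> \<sigma> 0 = 0"
  unfolding field_involution_def by (metis add_cancel_right_right)

lemma field_involution_one:
  assumes "field_involution \<sigma>"
  shows "\<sigma> 1 = 1"
proof -
  have "\<sigma> 1 = \<sigma> 1 * \<sigma> 1"
    using assms unfolding field_involution_def by (metis mult_1)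
  moreover have "\<sigma> 1 \<noteq> 0"
  proof
    assume "\<sigma> 1 = 0"
    then have "\<sigma> (\<sigma> 1) = 0" using field_involution_zero[OF assms] by simp
    then show False using assms unfolding field_involution_def by simp
  qed
  ultimately show ?thesis by simp
qed

lemma gstar_gstar [simp]: "gstar (gstar g) = g"
  by (cases g) auto

lemma fstar_word:
  assumes "field_involution \<sigma>"
  shows "fstar \<sigma> (word w) = (word (rev (map gstar w)) :: ('v, 'e, 'k::field) fpoly)"
proof
  fix u :: "('v, 'e) lgen list"
  have involutive: "rev (map gstar (rev (map gstar x))) = x" for x :: "('v, 'e) lgen list"
    by (induction x) auto
  have "rev (map gstar u) = w \<longleftrightarrow> u = rev (map gstar w)"
    using involutive by metis
  then show "fstar \<sigma> (word w) u = word (rev (map gstar w)) u"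
    by (simp add: fstar_def word_def field_involution_zero[OF assms] field_involution_one[OF assms])
qed

lemma fstar_ghost_word:
  "field_involution \<sigma> \<Longrightarrow> fstar \<sigma> (word (ghost_word p)) = (word (path_word p) :: ('v, 'e, 'k::field) fpoly)"
  by (simp add: fstar_word ghost_word_def path_word_def rev_map comp_def)

section \<open>Linear functionals on the free algebra\<close>

definition lin_ext :: "(('v, 'e) lgen list \<Rightarrow> 'k) \<Rightarrow> ('v, 'e, 'k::comm_ring_1) fpoly \<Rightarrow> 'k" where
  "lin_ext f p = (\<Sum>w\<in>support p. p w * f w)"

lemma lin_ext_eq_sum_superset:
  "finite A \<Longrightarrow> support p \<subseteq> A \<Longrightarrow> lin_ext f p = (\<Sum>w\<in>A. p w * f w)"
  unfolding lin_ext_def by (rule sum.mono_neutral_left) (auto simp: support_def)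

lemma lin_ext_word [simp]: "lin_ext f (word a :: ('v, 'e, 'k::comm_ring_1) fpoly) = f a"
  by (simp add: lin_ext_def) (simp add: word_def)

lemma lin_ext_fzero [simp]: "lin_ext f (fzero :: ('v, 'e, 'k::comm_ring_1) fpoly) = 0"
  by (simp add: lin_ext_def support_def fzero_def)

lemma fsupp_fzero [simp]: "fsupp (fzero :: ('v, 'e, 'k::zero) fpoly)"
  by (simp add: fsupp_def fzero_def)

lemma fdiff_fzero [simp]: "fdiff p fzero = (p :: ('v, 'e, 'k::comm_ring_1) fpoly)"
  by (simp add: fdiff_def fzero_def)

lemma fsupp_sum:
  assumes "finite F" "\<And>i. i \<in> F \<Longrightarrow> fsupp (g i)"
  shows "fsupp (\<lambda>w. \<Sum>i\<in>F. g i w :: 'k::comm_monoid_add)"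
proof -
  have "support (\<lambda>w. \<Sum>i\<in>F. g i w) \<subseteq> (\<Union>i\<in>F. support (g i))"
    by (auto simp: support_def intro: sum.not_neutral_contains_not_neutral)
  then show ?thesis
    using assms by (auto simp: fsupp_iff_finite_support intro: finite_subset)
qed

lemma lin_ext_sum:
  assumes "finite F" "\<And>i. i \<in> F \<Longrightarrow> fsupp (g i)"
  shows "lin_ext f (\<lambda>w. \<Sum>i\<in>F. g i w :: 'k::comm_ring_1) = (\<Sum>i\<in>F. lin_ext f (g i))"
proof -
  let ?A = "\<Union>i\<in>F. support (g i)"
  have A: "finite ?A" using assms by (simp add: fsupp_iff_finite_support)
  have "lin_ext f (\<lambda>w. \<Sum>i\<in>F. g i w) = (\<Sum>w\<in>?A. (\<Sum>i\<in>F. g i w) * f w)"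
    by (rule lin_ext_eq_sum_superset[OF A])
      (auto simp: support_def intro: sum.not_neutral_contains_not_neutral)
  also have "\<dots> = (\<Sum>i\<in>F. \<Sum>w\<in>?A. g i w * f w)"
    by (simp add: sum_distrib_right sum.swap[of _ F])
  also have "\<dots> = (\<Sum>i\<in>F. lin_ext f (g i))"
    by (rule sum.cong[OF refl], rule lin_ext_eq_sum_superset[OF A, symmetric]) auto
  finally show ?thesis .
qed

lemma
  assumes "fsupp p" "fsupp q"
  shows fsupp_fadd: "fsupp (fadd p q :: ('v, 'e, 'k::comm_ring_1) fpoly)"
    and fsupp_fdiff: "fsupp (fdiff p q)"
    and lin_ext_fadd: "lin_ext f (fadd p q) = lin_ext f p + lin_ext f q"
    and lin_ext_fdiff: "lin_ext f (fdiff p q) = lin_ext f p - lin_ext f q"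
proof -
  have "fsupp (\<lambda>w. \<Sum>i\<in>{True, False}. (if i then p else q) w)"
    by (rule fsupp_sum) (use assms in auto)
  then show "fsupp (fadd p q)"
    by (simp add: fadd_def)
  have "fsupp (\<lambda>w. \<Sum>i\<in>{True, False}. (if i then p else (\<lambda>w. - q w)) w)"
    by (rule fsupp_sum) (use assms in \<open>auto simp: fsupp_def\<close>)
  then show "fsupp (fdiff p q)"
    by (simp add: fdiff_def)
  show "lin_ext f (fadd p q) = lin_ext f p + lin_ext f q"
    using lin_ext_sum[of "{True, False}" "\<lambda>i. if i then p else q" f] assms
    by (simp add: fadd_def)
  have "lin_ext f (\<lambda>w. - q w) = - lin_ext f q"
    by (simp add: lin_ext_def support_def sum_negf)
  then show "lin_ext f (fdiff p q) = lin_ext f p - lin_ext f q"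
    using lin_ext_sum[of "{True, False}" "\<lambda>i. if i then p else (\<lambda>w. - q w)" f] assms
    by (simp add: fdiff_def fsupp_def)
qed

lemma fmul_eq_sum_support:
  assumes "fsupp p" "fsupp q"
  shows "fmul p q w = (\<Sum>(a, b)\<in>support p \<times> support q. if a @ b = w then p a * q b else (0::'k::comm_ring_1))"
proof -
  let ?h = "\<lambda>(a, b). if a @ b = w then p a * q b else (0::'k)"
  let ?S = "support p \<times> support q"
  let ?split = "\<lambda>i. (take i w, drop i w)"
  have S: "finite ?S" using assms by (simp add: fsupp_iff_finite_support)
  have split_inj: "inj_on ?split {..length w}"
    by (rule inj_onI) (metis Pair_inject atMost_iff length_take min.absorb2)
  have "(\<Sum>x\<in>?S. ?h x) = (\<Sum>x\<in>?S \<union> ?split ` {..length w}. ?h x)"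
    by (rule sum.mono_neutral_left) (use S in \<open>auto simp: support_def\<close>)
  also have "\<dots> = (\<Sum>x\<in>?split ` {..length w}. ?h x)"
  proof (rule sum.mono_neutral_right)
    show "\<forall>x\<in>?S \<union> ?split ` {..length w} - ?split ` {..length w}. ?h x = 0"
    proof
      fix x assume x: "x \<in> ?S \<union> ?split ` {..length w} - ?split ` {..length w}"
      obtain a b where ab: "x = (a, b)" by (cases x)
      have "a @ b \<noteq> w"
      proof
        assume "a @ b = w"
        then have "x = ?split (length a)" and "length a \<in> {..length w}"
          using ab by auto
        with x show False by blast
      qed
      then show "?h x = 0" by (simp add: ab)
    qed
  qed (use S in auto)
  also have "\<dots> = fmul p q w"
    by (simp add: sum.reindex[OF split_inj] fmul_def)
  finally show ?thesis by simp
qed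

lemma support_fmul_subset:
  assumes "fsupp p" "fsupp q"
  shows "support (fmul p q :: ('v, 'e, 'k::comm_ring_1) fpoly) \<subseteq> (\<lambda>(a, b). a @ b) ` (support p \<times> support q)"
proof
  fix w assume "w \<in> support (fmul p q)"
  then have "(\<Sum>(a, b)\<in>support p \<times> support q. if a @ b = w then p a * q b else (0::'k)) \<noteq> 0"
    by (simp add: support_def fmul_eq_sum_support[OF assms])
  then obtain x where x: "x \<in> support p \<times> support q"
      and "(case x of (a, b) \<Rightarrow> if a @ b = w then p a * q b else (0::'k)) \<noteq> 0"
    by (rule sum.not_neutral_contains_not_neutral)
  then have "(case x of (a, b) \<Rightarrow> a @ b) = w"
    by (auto split: prod.splits if_splits)
  with x show "w \<in> (\<lambda>(a, b). a @ b) ` (support p \<times> support q)"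
    by blast
qed

lemma fsupp_fmul:
  assumes "fsupp p" "fsupp q"
  shows "fsupp (fmul p q :: ('v, 'e, 'k::comm_ring_1) fpoly)"
proof -
  have "finite ((\<lambda>(a, b). a @ b) ` (support p \<times> support q))"
    using assms by (simp add: fsupp_iff_finite_support)
  then show ?thesis
    unfolding fsupp_iff_finite_support by (rule finite_subset[OF support_fmul_subset[OF assms]])
qed

lemma lin_ext_fmul:
  assumes "fsupp p" "fsupp q"
  shows "lin_ext f (fmul p q :: ('v, 'e, 'k::comm_ring_1) fpoly)
    = (\<Sum>a\<in>support p. \<Sum>b\<in>support q. p a * q b * f (a @ b))"
proof -
  let ?S = "support p \<times> support q"
  let ?T = "(\<lambda>(a, b). a @ b) ` ?S"
  have S: "finite ?S" using assms by (simp add: fsupp_iff_finite_support)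
  have "lin_ext f (fmul p q) = (\<Sum>w\<in>?T. fmul p q w * f w)"
    by (rule lin_ext_eq_sum_superset[OF _ support_fmul_subset[OF assms]]) (simp add: S)
  also have "\<dots> = (\<Sum>w\<in>?T. \<Sum>x\<in>?S. if fst x @ snd x = w then p (fst x) * q (snd x) * f w else 0)"
    by (rule sum.cong) (auto simp: fmul_eq_sum_support[OF assms] sum_distrib_right split_def intro!: sum.cong)
  also have "\<dots> = (\<Sum>x\<in>?S. \<Sum>w\<in>?T. if fst x @ snd x = w then p (fst x) * q (snd x) * f w else 0)"
    by (rule sum.swap)
  also have "\<dots> = (\<Sum>x\<in>?S. p (fst x) * q (snd x) * f (fst x @ snd x))"
    by (rule sum.cong) (auto simp: S)
  finally show ?thesis
    unfolding sum.cartesian_product by (simp add: split_def)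
qed

lemma lin_ext_fmul_left:
  assumes "fsupp p" "fsupp q"
  shows "lin_ext f (fmul p q :: ('v, 'e, 'k::comm_ring_1) fpoly)
    = (\<Sum>a\<in>support p. p a * lin_ext (\<lambda>b. f (a @ b)) q)"
  unfolding lin_ext_fmul[OF assms] by (simp add: lin_ext_def sum_distrib_left mult.assoc)

lemma lin_ext_fmul_right:
  assumes "fsupp p" "fsupp q"
  shows "lin_ext f (fmul p q :: ('v, 'e, 'k::comm_ring_1) fpoly)
    = (\<Sum>b\<in>support q. q b * lin_ext (\<lambda>a. f (a @ b)) p)"
proof -
  have "(\<Sum>b\<in>support q. q b * lin_ext (\<lambda>a. f (a @ b)) p)
      = (\<Sum>b\<in>support q. \<Sum>a\<in>support p. p a * q b * f (a @ b))"
    by (simp add: lin_ext_def sum_distrib_left mult.left_commute mult.assoc)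
  then show ?thesis
    by (simp add: lin_ext_fmul[OF assms] sum.swap[of _ "support q"])
qed

lemma lin_ext_gen_ideal:
  assumes fsupp_R: "\<And>x. x \<in> R \<Longrightarrow> fsupp x"
    and vanish: "\<And>x \<alpha> \<beta>. x \<in> R \<Longrightarrow> lin_ext (\<lambda>\<gamma>. f (\<alpha> @ \<gamma> @ \<beta>)) x = 0"
    and "q \<in> gen_ideal R"
  shows "fsupp q \<and> lin_ext f q = (0::'k::field)"
  using assms(3)
proof (induction rule: gen_ideal.induct)
  case (gen x a b)
  have x: "fsupp x" by (rule fsupp_R[OF gen(1)])
  have ax: "fsupp (fmul a x)" by (rule fsupp_fmul[OF gen(2) x])
  have "lin_ext f (fmul (fmul a x) b)
      = (\<Sum>c\<in>support b. b c * (\<Sum>d\<in>support a. a d * lin_ext (\<lambda>\<gamma>. f (d @ \<gamma> @ c)) x))"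
    by (simp add: lin_ext_fmul_right[OF ax gen(3)] lin_ext_fmul_left[OF gen(2) x])
  also have "\<dots> = 0"
    using vanish[OF gen(1)] by simp
  finally show ?case
    using fsupp_fmul[OF ax gen(3)] by simp
qed (simp_all add: fsupp_fadd lin_ext_fadd)

section \<open>The representation on boundary paths\<close>

text \<open>A boundary path is either a finite path ending at a vertex that is not regular, stored as its
  source vertex together with its edges (so that paths of length zero are possible), or an infinite path.\<close>

type_synonym ('v, 'e) bpath = "('v \<times> 'e list) + (nat \<Rightarrow> 'e)"

fun singular_path :: "'e set \<Rightarrow> ('e \<Rightarrow> 'v) \<Rightarrow> ('e \<Rightarrow> 'v) \<Rightarrow> 'v \<Rightarrow> 'e list \<Rightarrow> bool" where
  "singular_path Ed s r v [] \<longleftrightarrow> \<not> regular_vertex Ed s v"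
| "singular_path Ed s r v (e # q) \<longleftrightarrow> e \<in> Ed \<and> s e = v \<and> singular_path Ed s r (r e) q"

fun is_bpath :: "'e set \<Rightarrow> ('e \<Rightarrow> 'v) \<Rightarrow> ('e \<Rightarrow> 'v) \<Rightarrow> ('v, 'e) bpath \<Rightarrow> bool" where
  "is_bpath Ed s r (Inl (v, q)) \<longleftrightarrow> singular_path Ed s r v q"
| "is_bpath Ed s r (Inr \<xi>) \<longleftrightarrow> (\<forall>i. \<xi> i \<in> Ed \<and> r (\<xi> i) = s (\<xi> (Suc i)))"

fun bp_source :: "('e \<Rightarrow> 'v) \<Rightarrow> ('v, 'e) bpath \<Rightarrow> 'v" where
  "bp_source s (Inl (v, q)) = v"
| "bp_source s (Inr \<xi>) = s (\<xi> 0)"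

fun bp_head :: "('v, 'e) bpath \<Rightarrow> 'e option" where
  "bp_head (Inl (v, [])) = None"
| "bp_head (Inl (v, e # q)) = Some e"
| "bp_head (Inr \<xi>) = Some (\<xi> 0)"

fun bp_tail :: "('e \<Rightarrow> 'v) \<Rightarrow> ('v, 'e) bpath \<Rightarrow> ('v, 'e) bpath" where
  "bp_tail r (Inl (v, [])) = Inl (v, [])"
| "bp_tail r (Inl (v, e # q)) = Inl (r e, q)"
| "bp_tail r (Inr \<xi>) = Inr (\<lambda>i. \<xi> (Suc i))"

fun bp_cons :: "('e \<Rightarrow> 'v) \<Rightarrow> 'e \<Rightarrow> ('v, 'e) bpath \<Rightarrow> ('v, 'e) bpath" where
  "bp_cons s e (Inl (v, q)) = Inl (s e, e # q)"
| "bp_cons s e (Inr \<xi>) = Inr (case_nat e \<xi>)"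

lemma bp_source_cons [simp]: "bp_source s (bp_cons s e x) = s e"
  by (cases x) auto

lemma bp_head_cons [simp]: "bp_head (bp_cons s e x) = Some e"
  by (cases x) auto

lemma bp_tail_cons: "bp_source s x = r e \<Longrightarrow> bp_tail r (bp_cons s e x) = x"
  by (cases x) auto

lemma is_bpath_cons:
  "is_bpath Ed s r x \<Longrightarrow> e \<in> Ed \<Longrightarrow> bp_source s x = r e \<Longrightarrow> is_bpath Ed s r (bp_cons s e x)"
  by (cases x) (auto split: nat.split)

lemma is_bpath_head:
  assumes "is_bpath Ed s r x" "bp_head x = Some e"
  shows "e \<in> Ed \<and> s e = bp_source s x \<and> bp_source s (bp_tail r x) = r e
    \<and> bp_cons s e (bp_tail r x) = x \<and> is_bpath Ed s r (bp_tail r x)"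
proof (cases x)
  case (Inl a)
  then obtain v q where "x = Inl (v, q)" by (cases a) auto
  with assms show ?thesis by (cases q) auto
next
  case (Inr \<xi>)
  have "case_nat (\<xi> 0) (\<lambda>i. \<xi> (Suc i)) = \<xi>" by (rule ext) (simp split: nat.split)
  with assms Inr show ?thesis by auto
qed

lemma is_bpath_no_head:
  assumes "is_bpath Ed s r x" "bp_head x = None"
  shows "\<not> regular_vertex Ed s (bp_source s x)"
proof (cases x)
  case (Inl a)
  then obtain v q where "x = Inl (v, q)" by (cases a) auto
  with assms show ?thesis by (cases q) auto
qed (use assms in auto)

text \<open>A boundary path from v: follow chosen out-edges until a vertex that is not regular is
  reached; if that never happens, the walk is infinite.\<close>

definition out_edge :: "'e set \<Rightarrow> ('e \<Rightarrow> 'v) \<Rightarrow> 'v \<Rightarrow> 'e" where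
  "out_edge Ed s v = (SOME e. e \<in> Ed \<and> s e = v)"

fun greedy_walk :: "'e set \<Rightarrow> ('e \<Rightarrow> 'v) \<Rightarrow> ('e \<Rightarrow> 'v) \<Rightarrow> 'v \<Rightarrow> nat \<Rightarrow> 'v" where
  "greedy_walk Ed s r v 0 = v"
| "greedy_walk Ed s r v (Suc n) = greedy_walk Ed s r (r (out_edge Ed s v)) n"

lemma greedy_walk_Suc': "greedy_walk Ed s r v (Suc n) = r (out_edge Ed s (greedy_walk Ed s r v n))"
  by (induction n arbitrary: v) auto

lemma out_edge_regular: "regular_vertex Ed s v \<Longrightarrow> out_edge Ed s v \<in> Ed \<and> s (out_edge Ed s v) = v"
  unfolding out_edge_def regular_vertex_def by (rule someI_ex) blast

lemma ex_bpath_if_greedy_walk_stops: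
  "\<not> regular_vertex Ed s (greedy_walk Ed s r v n) \<Longrightarrow> \<exists>b. is_bpath Ed s r b \<and> bp_source s b = v"
proof (induction n arbitrary: v)
  case 0
  then show ?case by (intro exI[of _ "Inl (v, [])"]) simp
next
  case (Suc n)
  then obtain b where b: "is_bpath Ed s r b" "bp_source s b = r (out_edge Ed s v)" by auto
  show ?case
  proof (cases "regular_vertex Ed s v")
    case True
    then show ?thesis
      using is_bpath_cons[OF b(1) _ b(2)] out_edge_regular[OF True]
      by (intro exI[of _ "bp_cons s (out_edge Ed s v) b"]) simp
  next
    case False
    then show ?thesis by (intro exI[of _ "Inl (v, [])"]) simp
  qed
qed

lemma ex_bpath:
  fixes Ed :: "'e set" and s r :: "'e \<Rightarrow> 'v"
  shows "\<exists>b. is_bpath Ed s r b \<and> bp_source s b = v"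
proof (cases "\<exists>n. \<not> regular_vertex Ed s (greedy_walk Ed s r v n)")
  case True
  then obtain n where "\<not> regular_vertex Ed s (greedy_walk Ed s r v n)" ..
  then show ?thesis by (rule ex_bpath_if_greedy_walk_stops)
next
  case False
  then have reg: "\<And>n. regular_vertex Ed s (greedy_walk Ed s r v n)" by blast
  let ?b = "Inr (\<lambda>n. out_edge Ed s (greedy_walk Ed s r v n))"
  have "is_bpath Ed s r ?b"
    using out_edge_regular[OF reg] out_edge_regular[OF reg, of "Suc _"]
    by (simp del: greedy_walk.simps(2) add: greedy_walk_Suc')
  moreover have "bp_source s ?b = v" using out_edge_regular[OF reg[of 0]] by simp
  ultimately show ?thesis by blast
qed

text \<open>The standard representation on boundary paths, by partial maps; a word acts starting from
  its last letter.\<close>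

fun gen_act :: "'e set \<Rightarrow> ('e \<Rightarrow> 'v) \<Rightarrow> ('e \<Rightarrow> 'v) \<Rightarrow> ('v, 'e) lgen \<Rightarrow> ('v, 'e) bpath \<Rightarrow> ('v, 'e) bpath option" where
  "gen_act Ed s r (LV v) x = (if bp_source s x = v then Some x else None)"
| "gen_act Ed s r (LE e) x = (if e \<in> Ed \<and> bp_source s x = r e then Some (bp_cons s e x) else None)"
| "gen_act Ed s r (LG e) x = (if e \<in> Ed \<and> bp_head x = Some e then Some (bp_tail r x) else None)"

fun word_act :: "'e set \<Rightarrow> ('e \<Rightarrow> 'v) \<Rightarrow> ('e \<Rightarrow> 'v) \<Rightarrow> ('v, 'e) lgen list \<Rightarrow> ('v, 'e) bpath \<Rightarrow> ('v, 'e) bpath option" where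
  "word_act Ed s r [] x = Some x"
| "word_act Ed s r (g # w) x = Option.bind (word_act Ed s r w x) (gen_act Ed s r g)"

lemma word_act_append: "word_act Ed s r (a @ b) x = Option.bind (word_act Ed s r b x) (word_act Ed s r a)"
  by (induction a) auto

lemma is_bpath_gen_act: "is_bpath Ed s r x \<Longrightarrow> gen_act Ed s r g x = Some y \<Longrightarrow> is_bpath Ed s r y"
  by (cases g) (auto split: if_splits simp: is_bpath_cons dest: is_bpath_head)

lemma is_bpath_word_act: "is_bpath Ed s r x \<Longrightarrow> word_act Ed s r w x = Some y \<Longrightarrow> is_bpath Ed s r y"
proof (induction w arbitrary: y)
  case (Cons g w)
  then show ?case by (cases "word_act Ed s r w x") (auto intro: is_bpath_gen_act)
qed auto

lemma word_act_ghost_vertex: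
  assumes "is_bpath Ed s r x"
  shows "word_act Ed s r [LV (r e), LG e] x = word_act Ed s r [LG e] x"
    and "word_act Ed s r [LG e, LV (s e)] x = word_act Ed s r [LG e] x"
  using is_bpath_head[OF assms] by auto

text \<open>The coefficient of the basis vector x0 in w x0, in the vector space with basis the boundary paths.\<close>

definition diag_coeff :: "'e set \<Rightarrow> ('e \<Rightarrow> 'v) \<Rightarrow> ('e \<Rightarrow> 'v) \<Rightarrow> ('v, 'e) bpath \<Rightarrow> ('v, 'e) lgen list \<Rightarrow> 'k::{zero,one}" where
  "diag_coeff Ed s r x0 w = (if word_act Ed s r w x0 = Some x0 then 1 else 0)"

lemma lin_ext_diag_coeff_word_diff:
  assumes "is_bpath Ed s r x0" "\<And>x. is_bpath Ed s r x \<Longrightarrow> word_act Ed s r l x = word_act Ed s r m x"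
  shows "lin_ext (\<lambda>\<gamma>. diag_coeff Ed s r x0 (\<alpha> @ \<gamma> @ \<beta>)) (fdiff (word l) (word m) :: ('v, 'e, 'k::comm_ring_1) fpoly) = 0"
proof (cases "word_act Ed s r \<beta> x0")
  case (Some y)
  then have "is_bpath Ed s r y" using is_bpath_word_act assms(1) by blast
  then show ?thesis
    using Some assms(2)[of y] by (simp add: lin_ext_fdiff diag_coeff_def word_act_append)
qed (simp add: lin_ext_fdiff diag_coeff_def word_act_append)

lemma lin_ext_diag_coeff_word_undefined:
  assumes "is_bpath Ed s r x0" "\<And>x. is_bpath Ed s r x \<Longrightarrow> word_act Ed s r l x = None"
  shows "lin_ext (\<lambda>\<gamma>. diag_coeff Ed s r x0 (\<alpha> @ \<gamma> @ \<beta>)) (word l :: ('v, 'e, 'k::comm_ring_1) fpoly) = 0"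
proof (cases "word_act Ed s r \<beta> x0")
  case (Some y)
  then have "is_bpath Ed s r y" using is_bpath_word_act assms(1) by blast
  then show ?thesis
    using Some assms(2)[of y] by (simp add: diag_coeff_def word_act_append)
qed (simp add: diag_coeff_def word_act_append)

text \<open>(CK2) holds in the representation: a boundary path through a regular vertex has a first edge.\<close>

lemma diag_coeff_ck2:
  assumes "is_bpath Ed s r x0" "regular_vertex Ed s v"
  shows "(diag_coeff Ed s r x0 (\<alpha> @ [LV v] @ \<beta>) :: 'k::comm_ring_1)
    = (\<Sum>e\<in>{e \<in> Ed. s e = v}. diag_coeff Ed s r x0 (\<alpha> @ [LE e, LG e] @ \<beta>))"
proof (cases "word_act Ed s r \<beta> x0")
  case (Some y)
  then have y: "is_bpath Ed s r y" using is_bpath_word_act assms(1) by blast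
  show ?thesis
  proof (cases "bp_source s y = v")
    case True
    then obtain e0 where e0: "bp_head y = Some e0"
      using is_bpath_no_head[OF y] assms(2) by (cases "bp_head y") auto
    note head = is_bpath_head[OF y e0]
    have "(\<Sum>e\<in>{e \<in> Ed. s e = v}. (diag_coeff Ed s r x0 (\<alpha> @ [LE e, LG e] @ \<beta>) :: 'k))
        = (\<Sum>e\<in>{e \<in> Ed. s e = v}. if e = e0 then diag_coeff Ed s r x0 (\<alpha> @ [LV v] @ \<beta>) else 0)"
      by (rule sum.cong) (use Some True e0 head in \<open>auto simp: diag_coeff_def word_act_append\<close>)
    also have "\<dots> = diag_coeff Ed s r x0 (\<alpha> @ [LV v] @ \<beta>)"
      using head True assms(2) by (simp add: regular_vertex_def)
    finally show ?thesis by simp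
  next
    case False
    have "bp_head y \<noteq> Some e" if "e \<in> Ed" "s e = v" for e
      using is_bpath_head[OF y, of e] that False by auto
    then have "(\<Sum>e\<in>{e \<in> Ed. s e = v}. (diag_coeff Ed s r x0 (\<alpha> @ [LE e, LG e] @ \<beta>) :: 'k)) = 0"
      using Some by (intro sum.neutral) (auto simp: diag_coeff_def word_act_append)
    then show ?thesis using Some False by (simp add: diag_coeff_def word_act_append)
  qed
qed (simp add: diag_coeff_def word_act_append)

lemma fsupp_lpa_rels: "x \<in> lpa_rels V Ed s r \<Longrightarrow> fsupp x"
proof (induction rule: lpa_rels.induct)
  case (relCK2 v)
  then have "finite {e \<in> Ed. s e = v}" by (simp add: regular_vertex_def)
  then show ?case
    by (intro fsupp_fdiff fsupp_sum) (simp_all add: mono_eq_word fmul_word)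
qed (simp_all add: mono_eq_word fmul_word fsupp_fdiff)

lemma lin_ext_diag_coeff_lpa_rels:
  fixes x :: "('v, 'e, 'k::field) fpoly"
  assumes "x \<in> lpa_rels V Ed s r" "is_bpath Ed s r x0"
  shows "lin_ext (\<lambda>\<gamma>. diag_coeff Ed s r x0 (\<alpha> @ \<gamma> @ \<beta>)) x = 0"
  using assms(1)
proof cases
  case (relV v w)
  show ?thesis
  proof (cases "v = w")
    case True
    with relV have "x = fdiff (word [LV v, LV v]) (word [LV v])" by (simp add: mono_eq_word fmul_word)
    then show ?thesis by (simp add: lin_ext_diag_coeff_word_diff[OF assms(2)])
  next
    case False
    with relV have "x = word [LV v, LV w]" by (simp add: mono_eq_word fmul_word)
    then show ?thesis
      by (simp only:) (rule lin_ext_diag_coeff_word_undefined[OF assms(2)], use False in simp)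
  qed
next
  case (relE1a e)
  then show ?thesis by (simp add: mono_eq_word fmul_word lin_ext_diag_coeff_word_diff[OF assms(2)])
next
  case (relE1b e)
  then show ?thesis by (simp add: mono_eq_word fmul_word lin_ext_diag_coeff_word_diff[OF assms(2)])
next
  case (relE2a e)
  then show ?thesis
    by (simp add: mono_eq_word fmul_word)
      (rule lin_ext_diag_coeff_word_diff[OF assms(2) word_act_ghost_vertex(1)])
next
  case (relE2b e)
  then show ?thesis
    by (simp add: mono_eq_word fmul_word)
      (rule lin_ext_diag_coeff_word_diff[OF assms(2) word_act_ghost_vertex(2)])
next
  case (relCK1 e f)
  show ?thesis
  proof (cases "e = f")
    case True
    with relCK1 have "x = fdiff (word [LG e, LE e]) (word [LV (r e)])" by (simp add: mono_eq_word fmul_word)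
    then show ?thesis
      using relCK1 by (simp add: lin_ext_diag_coeff_word_diff[OF assms(2)] bp_tail_cons)
  next
    case False
    with relCK1 have "x = word [LG e, LE f]" by (simp add: mono_eq_word fmul_word)
    then show ?thesis
      by (simp only:) (rule lin_ext_diag_coeff_word_undefined[OF assms(2)], use False in simp)
  qed
next
  case (relCK2 v)
  let ?F = "{e \<in> Ed. s e = v}"
  have F: "finite ?F" using relCK2 by (simp add: regular_vertex_def)
  have "x = fdiff (word [LV v]) (\<lambda>w. \<Sum>e\<in>?F. (word [LE e, LG e] :: ('v, 'e, 'k) fpoly) w)"
    using relCK2 by (simp add: mono_eq_word fmul_word)
  then show ?thesis
    using diag_coeff_ck2[OF assms(2) relCK2(3), of \<alpha> \<beta>]
    by (simp add: lin_ext_fdiff fsupp_sum[OF F] lin_ext_sum[OF F])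
qed

lemma lin_ext_diag_coeff_gen_ideal:
  fixes q :: "('v, 'e, 'k::field) fpoly"
  assumes "q \<in> gen_ideal (lpa_rels V Ed s r)" "is_bpath Ed s r x0"
  shows "lin_ext (diag_coeff Ed s r x0) q = 0"
proof -
  have "fsupp q \<and> lin_ext (diag_coeff Ed s r x0) q = 0"
    by (rule lin_ext_gen_ideal[OF _ _ assms(1)])
      (auto intro: fsupp_lpa_rels lin_ext_diag_coeff_lpa_rels[OF _ assms(2)])
  then show ?thesis ..
qed

lemma not_lpa_eq_path_ghost:
  assumes "p \<noteq> []" "f \<in> Ed" "s f = s (hd p)" "f \<noteq> hd p"
  shows "\<not> lpa_eq V Ed s r (fmul (word (path_word p)) (word (ghost_word p)))
    (word [LV (s (hd p))] :: ('v, 'e, 'k::field) fpoly)"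
proof
  obtain b where b: "is_bpath Ed s r b" "bp_source s b = r f"
    using ex_bpath[of Ed s r "r f"] by blast
  define x0 where "x0 = bp_cons s f b"
  have x0: "is_bpath Ed s r x0"
    unfolding x0_def by (rule is_bpath_cons[OF b(1) assms(2) b(2)])
  have ghost_kills: "word_act Ed s r (ghost_word p) x0 = None"
    using assms(1,4) by (cases p) (auto simp: ghost_word_def x0_def word_act_append)
  assume "lpa_eq V Ed s r (fmul (word (path_word p)) (word (ghost_word p)))
    (word [LV (s (hd p))] :: ('v, 'e, 'k) fpoly)"
  then have "lin_ext (diag_coeff Ed s r x0)
      (fdiff (word (path_word p @ ghost_word p)) (word [LV (s (hd p))]) :: ('v, 'e, 'k) fpoly) = 0"
    unfolding lpa_eq_def fmul_word by (rule lin_ext_diag_coeff_gen_ideal[OF _ x0])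
  then show False
    using ghost_kills assms(3) by (simp add: lin_ext_fdiff diag_coeff_def word_act_append x0_def)
qed

definition closed_path :: "'e set \<Rightarrow> ('e \<Rightarrow> 'v) \<Rightarrow> ('e \<Rightarrow> 'v) \<Rightarrow> 'e list \<Rightarrow> bool" where
  "closed_path Ed s r p \<longleftrightarrow>
     p \<noteq> [] \<and> set p \<subseteq> Ed \<and> successively (\<lambda>e e'. r e = s e') p \<and> r (last p) = s (hd p)"

lemma closed_path_rotate1:
  assumes "closed_path Ed s r p"
  shows "closed_path Ed s r (rotate1 p)"
proof -
  obtain e q where p: "p = e # q"
    using assms by (cases p) (auto simp: closed_path_def)
  show ?thesis
  proof (cases "q = []")
    case True
    then show ?thesis using assms p by simp
  next
    case False
    then have "successively (\<lambda>e e'. r e = s e') (q @ [e])"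
      unfolding successively_append_iff using assms p by (auto simp: closed_path_def successively_Cons)
    with False show ?thesis
      using assms p by (auto simp: closed_path_def successively_Cons)
  qed
qed

lemma closed_path_rotate: "closed_path Ed s r p \<Longrightarrow> closed_path Ed s r (rotate n p)"
  by (induction n) (auto intro: closed_path_rotate1)

lemma is_cycle_imp_closed_path: "is_cycle Ed s r c \<Longrightarrow> closed_path Ed s r c"
  by (simp add: is_cycle_def closed_path_def successively_conv_nth)

lemma closed_path_exit_if_not_no_exit:
  assumes "\<not> no_exit V Ed s r"
  obtains p f where "closed_path Ed s r p" "f \<in> Ed" "s f = s (hd p)" "f \<noteq> hd p"
proof -
  obtain c v where c: "is_cycle Ed s r c" and v: "v \<in> s ` set c"
    and not_unique: "\<not> (\<exists>!e. e \<in> Ed \<and> s e = v)"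
    using assms unfolding no_exit_def by blast
  obtain i where i: "i < length c" "v = s (c ! i)"
    using v by (auto simp: in_set_conv_nth)
  then have "c ! i \<in> Ed"
    using c by (auto simp: is_cycle_def)
  then obtain f where f: "f \<in> Ed" "s f = v" "f \<noteq> c ! i"
    using not_unique unfolding i(2) by blast
  have "hd (rotate i c) = c ! i"
    using i c by (simp add: hd_rotate_conv_nth is_cycle_def)
  then show ?thesis
    using that[OF closed_path_rotate[OF is_cycle_imp_closed_path[OF c]], of f i] f i by simp
qed

lemma closed_path_exit_not_directly_finite:
  fixes Ed :: "'e set" and s r :: "'e \<Rightarrow> 'v"
  assumes "closed_path Ed s r p" "s (hd p) \<in> V" "f \<in> Ed" "s f = s (hd p)" "f \<noteq> hd p"
  shows "\<not> lpa_directly_finite TYPE('k::field) V Ed s r"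
proof
  let ?u = "word [LV (s (hd p))] :: ('v, 'e, 'k) fpoly"
  let ?x = "word (ghost_word p) :: ('v, 'e, 'k) fpoly"
  let ?y = "word (path_word p) :: ('v, 'e, 'k) fpoly"
  have p: "p \<noteq> []" "set p \<subseteq> Ed" "successively (\<lambda>e e'. r e = s e') p" "r (last p) = s (hd p)"
    using assms(1) by (simp_all add: closed_path_def)
  assume "lpa_directly_finite TYPE('k) V Ed s r"
  then have "lpa_eq V Ed s r (fmul ?y ?x) ?u"
  proof (rule lpa_directly_finite_def[THEN iffD1, rule_format])
    show "?x \<in> FA" "?y \<in> FA" "?u \<in> FA"
      using p(1) by (simp_all add: word_in_FA ghost_word_def path_word_def)
    show "lpa_eq V Ed s r (fmul ?u ?u) ?u" by (rule lpa_eq_vertex_idem[OF assms(2)])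
    show "lpa_eq V Ed s r (fmul ?x ?u) ?x" by (rule lpa_eq_ghost_source[OF p(1,2)])
    show "lpa_eq V Ed s r (fmul ?u ?x) ?x" by (rule lpa_eq_range_ghost[OF p(1,2), where s = s and r = r, unfolded p(4)])
    show "lpa_eq V Ed s r (fmul ?y ?u) ?y" by (rule lpa_eq_path_range[OF p(1,2), where s = s and r = r, unfolded p(4)])
    show "lpa_eq V Ed s r (fmul ?u ?y) ?y" by (rule lpa_eq_source_path[OF p(1,2)])
    show "lpa_eq V Ed s r (fmul ?x ?y) ?u" by (rule lpa_eq_ghost_path[OF p(1-3), where V = V, unfolded p(4)])
  qed
  with not_lpa_eq_path_ghost[OF p(1) assms(3-5)] show False by blast
qed

lemma closed_path_exit_not_finite:
  fixes Ed :: "'e set" and s r :: "'e \<Rightarrow> 'v" and \<sigma> :: "'k::field \<Rightarrow> 'k"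
  assumes "field_involution \<sigma>"
    and "closed_path Ed s r p" "s (hd p) \<in> V" "f \<in> Ed" "s f = s (hd p)" "f \<noteq> hd p"
  shows "\<not> lpa_finite \<sigma> V Ed s r"
proof
  let ?u = "word [LV (s (hd p))] :: ('v, 'e, 'k) fpoly"
  let ?x = "word (ghost_word p) :: ('v, 'e, 'k) fpoly"
  have p: "p \<noteq> []" "set p \<subseteq> Ed" "successively (\<lambda>e e'. r e = s e') p" "r (last p) = s (hd p)"
    using assms(2) by (simp_all add: closed_path_def)
  have star: "fstar \<sigma> ?x = word (path_word p)"
    by (rule fstar_ghost_word[OF assms(1)])
  assume "lpa_finite \<sigma> V Ed s r"
  then have "lpa_eq V Ed s r (fmul (fstar \<sigma> ?x) ?x) ?u"
  proof (rule lpa_finite_def[THEN iffD1, rule_format])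
    show "?x \<in> FA" "?u \<in> FA"
      using p(1) by (simp_all add: word_in_FA ghost_word_def)
    show "lpa_eq V Ed s r (fmul ?u ?u) ?u" by (rule lpa_eq_vertex_idem[OF assms(3)])
    show "lpa_eq V Ed s r (fmul ?x ?u) ?x" by (rule lpa_eq_ghost_source[OF p(1,2)])
    show "lpa_eq V Ed s r (fmul ?u ?x) ?x" by (rule lpa_eq_range_ghost[OF p(1,2), where s = s and r = r, unfolded p(4)])
    show "lpa_eq V Ed s r (fmul ?x (fstar \<sigma> ?x)) ?u"
      unfolding star by (rule lpa_eq_ghost_path[OF p(1-3), where V = V, unfolded p(4)])
  qed
  with not_lpa_eq_path_ghost[OF p(1) assms(4-6)] show False
    unfolding star by blast
qed

theorem proposition4p3:
  fixes V :: "'v set" and Ed :: "'e set" and s r :: "'e \<Rightarrow> 'v" and \<sigma> :: "'k::field \<Rightarrow> 'k"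
  assumes "s ` Ed \<subseteq> V" and "r ` Ed \<subseteq> V"
    and "field_involution \<sigma>"
    and "lpa_directly_finite TYPE('k) V Ed s r \<or> lpa_finite \<sigma> V Ed s r"
  shows "no_exit V Ed s r"
proof (rule ccontr)
  assume "\<not> no_exit V Ed s r"
  then obtain p f where p: "closed_path Ed s r p" and f: "f \<in> Ed" "s f = s (hd p)" "f \<noteq> hd p"
    by (rule closed_path_exit_if_not_no_exit)
  then have "hd p \<in> Ed"
    by (auto simp: closed_path_def)
  then have "s (hd p) \<in> V"
    using assms(1) by blast
  then show False
    using assms(4) closed_path_exit_not_directly_finite[OF p _ f] closed_path_exit_not_finite[OF assms(3) p _ f]
    by blast
qed

end
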